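(* Let $(\mathcal{G},S)$ be an instance of \textsc{Temporally Disjoint Walks} where $\mathcal{G}$ is a temporal line, and let $\mathcal{S}$ be a solution that minimizes the sum of the lengths of its walks among all solutions. Let $W\in\mathcal{S}$ be a temporal $(s,z)$-walk. Then at most $2|S|$ pairs of transitions of the form $(a,b,t),(b,a,t')$ with $t<t'$ are consecutive in $W$.
   Context: A temporal graph $\mathcal{G}=(V,E_1,\ldots,E_T)$ has vertex set $V$ and edge sets $E_1,\ldots,E_T\subseteq\binom{V}{2}$; it is a temporal line if its underlying graph $(V,\bigcup_i E_i)$ is a path. A temporal $(s,z)$-walk of length $k$ from $s=v_0$ to $z=v_k$ is a sequence of transitions $((v_{i-1},v_i,t_i))_{i=1}^k$ with $\{v_{i-1},v_i\}\in E_{t_i}$ and $t_1<\cdots<t_k$. It occupies $v_i$ during $[t_i,t_{i+1}]$ for $i\in[k-1]$, $v_0$ during $[t_1,t_1]$ and $v_k$ during $[t_k,t_k]$. Two temporal walks are temporally disjoint unless some vertex is occupied by both during intersecting time intervals. \textsc{Temporally Disjoint Walks} asks, given $\mathcal{G}$ and a multiset $S\subseteq V\times V$ of source-sink pairs, for pairwise temporally disjoint temporal $(s_i,z_i)$-walks, one for each $(s_i,z_i)\in S$; a solution $\mathcal{S}$ is such a family, and $|S|$ is the number of source-sink pairs. *)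

theory Defs
  imports Main "HOL-Library.Multiset"
begin

definition temporal_graph :: "'v set \<Rightarrow> ('v set set) list \<Rightarrow> bool" where
  "temporal_graph V Es \<longleftrightarrow> finite V \<and>
     (\<forall>Et \<in> set Es. \<forall>e \<in> Et. \<exists>u v. e = {u, v} \<and> u \<noteq> v \<and> u \<in> V \<and> v \<in> V)"

text \<open>Edge set at time step t (time steps are 1..T with T = length Es).\<close>
definition edges_at :: "('v set set) list \<Rightarrow> nat \<Rightarrow> 'v set set" where
  "edges_at Es t = (if 1 \<le> t \<and> t \<le> length Es then Es ! (t - 1) else {})"

definition underlying_edges :: "('v set set) list \<Rightarrow> 'v set set" where
  "underlying_edges Es = (\<Union>t\<in>{1..length Es}. edges_at Es t)"

definition temporal_line :: "'v set \<Rightarrow> ('v set set) list \<Rightarrow> bool" where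
  "temporal_line V Es \<longleftrightarrow> temporal_graph V Es \<and>
     (\<exists>vs. vs \<noteq> [] \<and> distinct vs \<and> set vs = V \<and>
        underlying_edges Es = {{vs ! i, vs ! (i + 1)} | i. i + 1 < length vs})"

text \<open>A temporal walk is the list of its transitions (v_{i-1}, v_i, t_i).\<close>
type_synonym 'v twalk = "('v \<times> 'v \<times> nat) list"

definition tw_from :: "'v twalk \<Rightarrow> nat \<Rightarrow> 'v" where "tw_from W i = fst (W ! i)"
definition tw_to :: "'v twalk \<Rightarrow> nat \<Rightarrow> 'v" where "tw_to W i = fst (snd (W ! i))"
definition tw_time :: "'v twalk \<Rightarrow> nat \<Rightarrow> nat" where "tw_time W i = snd (snd (W ! i))"

definition is_temporal_walk ::
  "('v set set) list \<Rightarrow> 'v \<Rightarrow> 'v \<Rightarrow> 'v twalk \<Rightarrow> bool" where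
  "is_temporal_walk Es s z W \<longleftrightarrow> W \<noteq> [] \<and>
     tw_from W 0 = s \<and> tw_to W (length W - 1) = z \<and>
     (\<forall>i < length W. {tw_from W i, tw_to W i} \<in> edges_at Es (tw_time W i)) \<and>
     (\<forall>i. i + 1 < length W \<longrightarrow> tw_to W i = tw_from W (i + 1) \<and>
                                 tw_time W i < tw_time W (i + 1))"

text \<open>Occupation: triples (v, a, b) meaning the walk occupies v during [a,b].\<close>
definition occupation :: "'v twalk \<Rightarrow> ('v \<times> nat \<times> nat) set" where
  "occupation W =
     {(tw_from W 0, tw_time W 0, tw_time W 0)} \<union>
     {(tw_to W i, tw_time W i, tw_time W (i + 1)) | i. i + 1 < length W} \<union>
     {(tw_to W (length W - 1), tw_time W (length W - 1), tw_time W (length W - 1))}"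

definition temporally_disjoint :: "'v twalk \<Rightarrow> 'v twalk \<Rightarrow> bool" where
  "temporally_disjoint W1 W2 \<longleftrightarrow>
     \<not> (\<exists>v a b c d. (v, a, b) \<in> occupation W1 \<and> (v, c, d) \<in> occupation W2 \<and>
                    max a c \<le> min b d)"

definition is_tdw_solution ::
  "('v set set) list \<Rightarrow> ('v \<times> 'v) multiset \<Rightarrow> (('v \<times> 'v) \<times> 'v twalk) list \<Rightarrow> bool" where
  "is_tdw_solution Es S Sol \<longleftrightarrow>
     mset (map fst Sol) = S \<and>
     (\<forall>i < length Sol. is_temporal_walk Es (fst (fst (Sol ! i))) (snd (fst (Sol ! i))) (snd (Sol ! i))) \<and>
     (\<forall>i < length Sol. \<forall>j < length Sol. i \<noteq> j \<longrightarrow>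
        temporally_disjoint (snd (Sol ! i)) (snd (Sol ! j)))"

definition total_length :: "(('v \<times> 'v) \<times> 'v twalk) list \<Rightarrow> nat" where
  "total_length Sol = (\<Sum>p \<leftarrow> Sol. length (snd p))"

definition num_back_and_forth :: "'v twalk \<Rightarrow> nat" where
  "num_back_and_forth W = card {i. i + 1 < length W \<and>
       tw_from W (i + 1) = tw_to W i \<and> tw_to W (i + 1) = tw_from W i \<and>
       tw_time W i < tw_time W (i + 1)}"

end

theory Submission
  imports Defs
begin

text \<open>
  Suppose W goes from a to b at time t and straight back to a at time t'. Dropping these two
  transitions gives a shorter walk, so by minimality it collides with another walk Y of the
  solution. The only new occupation is a stay at a from the arrival at a before t until the
  departure after t', and W itself already stays at a up to t and from t' on; hence Y visits a
  strictly inside (t, t') while W waits at b. On a line, a has at most one neighbour besides b,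
  and Y can neither come from nor go to b, so this visit of Y is its start or end, or a
  back-and-forth of Y through a during a strictly shorter interval. Induction on the interval
  length puts a start or end time of some walk strictly inside (t, t'). These open intervals are
  disjoint for distinct back-and-forths of W, and the solution has at most 2|S| start and end
  times.
\<close>

lemma temporal_walk_step:
  assumes "is_temporal_walk Es s z W" "i + 1 < length W"
  shows "tw_to W i = tw_from W (i + 1)" "tw_time W i < tw_time W (i + 1)"
  using assms unfolding is_temporal_walk_def by auto

lemma temporal_walk_time_strict_mono:
  assumes "is_temporal_walk Es s z W"
  shows "strict_mono_on {..<length W} (tw_time W)"
proof (rule strict_mono_onI)
  have step: "tw_time W k < tw_time W (Suc k)" if "Suc k < length W" for k
    using temporal_walk_step(2)[OF assms, of k] that by simp
  have "tw_time W i < tw_time W j" if "i < j" "j < length W" for i j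
    using that by (induction j) (auto simp: less_Suc_eq intro: step less_trans[OF _ step])
  then show "tw_time W i < tw_time W j" if "i \<in> {..<length W}" "j \<in> {..<length W}" "i < j" for i j
    using that by simp
qed

lemma temporal_walk_underlying_edge:
  assumes "is_temporal_walk Es s z W" "i < length W"
  shows "{tw_from W i, tw_to W i} \<in> underlying_edges Es"
proof -
  have "{tw_from W i, tw_to W i} \<in> edges_at Es (tw_time W i)"
    using assms unfolding is_temporal_walk_def by auto
  then show ?thesis
    unfolding underlying_edges_def by (auto simp: edges_at_def split: if_splits)
qed

lemma occupation_le:
  assumes "is_temporal_walk Es s z W" "(v, x, y) \<in> occupation W"
  shows "x \<le> y"
  using assms(2) temporal_walk_step(2)[OF assms(1)] unfolding occupation_def
  by (auto simp: less_imp_le)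

lemma occupation_between_transitions:
  "i + 1 < length W \<Longrightarrow> (tw_to W i, tw_time W i, tw_time W (i + 1)) \<in> occupation W"
  unfolding occupation_def by auto

lemma occupation_before_transition:
  assumes "is_temporal_walk Es s z W" "i < length W"
  shows "\<exists>x. (tw_from W i, x, tw_time W i) \<in> occupation W"
proof (cases i)
  case 0
  then show ?thesis unfolding occupation_def by auto
next
  case (Suc h)
  then show ?thesis
    using assms occupation_between_transitions[of h W] temporal_walk_step(1)[OF assms(1), of h] by auto
qed

lemma occupation_after_transition:
  assumes "i < length W"
  shows "\<exists>y. (tw_to W i, tw_time W i, y) \<in> occupation W"
proof (cases "i + 1 < length W")
  case True
  then show ?thesis using occupation_between_transitions by blast
next
  case False
  then have "i = length W - 1" using assms by simp
  then show ?thesis unfolding occupation_def by blast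
qed

lemma temporally_disjoint_sym: "temporally_disjoint W1 W2 \<Longrightarrow> temporally_disjoint W2 W1"
  unfolding temporally_disjoint_def by (metis max.commute min.commute)

lemma temporally_disjointD:
  "temporally_disjoint W1 W2 \<Longrightarrow> (v, a, b) \<in> occupation W1 \<Longrightarrow> (v, c, d) \<in> occupation W2 \<Longrightarrow>
    max a c \<le> min b d \<Longrightarrow> False"
  unfolding temporally_disjoint_def by blast

lemma temporal_line_at_most_two_neighbours:
  assumes "temporal_line V Es"
  obtains p q where "\<And>u. {a, u} \<in> underlying_edges Es \<Longrightarrow> u = p \<or> u = q"
proof -
  obtain vs where vs: "distinct vs" "underlying_edges Es = {{vs ! i, vs ! (i + 1)} | i. i + 1 < length vs}"
    using assms unfolding temporal_line_def by blast
  have nbr: "u = vs ! (k + 1) \<or> u = vs ! (k - 1)"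
    if k: "k < length vs" "a = vs ! k" and edge: "{a, u} \<in> underlying_edges Es" for k u
  proof -
    obtain i where i: "i + 1 < length vs" "{a, u} = {vs ! i, vs ! (i + 1)}"
      using edge vs(2) by auto
    then consider "a = vs ! i" "u = vs ! (i + 1)" | "a = vs ! (i + 1)" "u = vs ! i"
      by (auto simp: doubleton_eq_iff)
    then show ?thesis using k i(1) vs(1) by cases (auto simp: nth_eq_iff_index_eq)
  qed
  show ?thesis
  proof (cases "a \<in> set vs")
    case True
    then obtain k where "k < length vs" "a = vs ! k" by (auto simp: in_set_conv_nth)
    then show ?thesis using that nbr by blast
  next
    case False
    then have "{a, u} \<notin> underlying_edges Es" for u
      using vs(2) by (auto simp: doubleton_eq_iff)
    then show ?thesis using that by blast
  qed
qed

definition shortcut :: "'v twalk \<Rightarrow> nat \<Rightarrow> 'v twalk" where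
  "shortcut W j = take j W @ drop (j + 2) W"

lemma length_shortcut: "j + 2 \<le> length W \<Longrightarrow> length (shortcut W j) = length W - 2"
  unfolding shortcut_def by simp

lemma shortcut_prefix_tw:
  assumes "i < j" "j + 2 \<le> length W"
  shows "tw_from (shortcut W j) i = tw_from W i" "tw_to (shortcut W j) i = tw_to W i"
    "tw_time (shortcut W j) i = tw_time W i"
  using assms unfolding shortcut_def tw_from_def tw_to_def tw_time_def by (simp_all add: nth_append)

lemma shortcut_suffix_tw:
  assumes "j \<le> i" "i + 2 < length W"
  shows "tw_from (shortcut W j) i = tw_from W (i + 2)" "tw_to (shortcut W j) i = tw_to W (i + 2)"
    "tw_time (shortcut W j) i = tw_time W (i + 2)"
  using assms unfolding shortcut_def tw_from_def tw_to_def tw_time_def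
  by (simp_all add: nth_append min_def add.commute)

lemmas shortcut_tw = shortcut_prefix_tw shortcut_suffix_tw

lemma shortcut_endpoints:
  assumes W: "is_temporal_walk Es s z W" and len: "3 \<le> length W" "j + 1 < length W"
    and closed: "tw_to W (j + 1) = tw_from W j"
  shows "tw_from (shortcut W j) 0 = tw_from W 0"
    and "tw_to (shortcut W j) (length W - 3) = tw_to W (length W - 1)"
proof -
  note step = temporal_walk_step(1)[OF W]
  show "tw_from (shortcut W j) 0 = tw_from W 0"
  proof (cases "j = 0")
    case True
    then have "tw_from (shortcut W j) 0 = tw_from W 2" using len by (simp add: shortcut_tw numeral_2_eq_2)
    also have "\<dots> = tw_from W 0" using step[of 1] closed True len by (simp add: numeral_2_eq_2)
    finally show ?thesis .
  qed (use len in \<open>simp add: shortcut_tw\<close>)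
  show "tw_to (shortcut W j) (length W - 3) = tw_to W (length W - 1)"
  proof (cases "j + 2 = length W")
    case True
    then have "length W - 3 = j - 1" "j - 1 < j" using len by auto
    then have "tw_to (shortcut W j) (length W - 3) = tw_to W (j - 1)"
      using \<open>j + 2 = length W\<close> by (simp add: shortcut_tw)
    also have "\<dots> = tw_to W (j + 1)" using step[of "j - 1"] closed True len by simp
    also have "j + 1 = length W - 1" using True by simp
    finally show ?thesis .
  next
    case False
    then have "j \<le> length W - 3" "length W - 3 + 2 = length W - 1" using len by auto
    then show ?thesis using shortcut_suffix_tw(2)[of j "length W - 3" W] len by simp
  qed
qed

lemma shortcut_transition_link:
  assumes W: "is_temporal_walk Es s z W" and len: "j + 1 < length W"
    and closed: "tw_to W (j + 1) = tw_from W j" and i: "i + 3 < length W"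
  shows "tw_to (shortcut W j) i = tw_from (shortcut W j) (i + 1)
    \<and> tw_time (shortcut W j) i < tw_time (shortcut W j) (i + 1)"
proof -
  note step = temporal_walk_step[OF W]
  consider "i + 1 < j" | "i + 1 = j" | "j \<le> i" by linarith
  then show ?thesis
  proof cases
    case 1
    then show ?thesis using step[of i] len by (simp add: shortcut_tw)
  next
    case 2
    have "tw_to W i = tw_from W (i + 3)"
      using step(1)[of i] step(1)[of "i + 2"] closed 2 i by (simp add: numeral_3_eq_3)
    moreover have "tw_time W i < tw_time W (i + 3)"
      using strict_mono_onD[OF temporal_walk_time_strict_mono[OF W], of i "i + 3"] i by simp
    ultimately show ?thesis using 2 i by (simp add: shortcut_tw numeral_3_eq_3)
  next
    case 3
    then show ?thesis using step[of "i + 2"] i by (simp add: shortcut_tw)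
  qed
qed

lemma shortcut_is_temporal_walk:
  assumes W: "is_temporal_walk Es s z W" and len: "3 \<le> length W" "j + 1 < length W"
    and closed: "tw_to W (j + 1) = tw_from W j"
  shows "is_temporal_walk Es s z (shortcut W j)"
proof -
  let ?U = "shortcut W j"
  have len_U: "length ?U = length W - 2" using len by (simp add: length_shortcut)
  have edge: "{tw_from W i, tw_to W i} \<in> edges_at Es (tw_time W i)" if "i < length W" for i
    using W that unfolding is_temporal_walk_def by blast
  have "{tw_from ?U i, tw_to ?U i} \<in> edges_at Es (tw_time ?U i)" if "i < length ?U" for i
  proof (cases "i < j")
    case True
    then show ?thesis using edge[of i] len that len_U by (simp add: shortcut_tw)
  next
    case False
    then show ?thesis using edge[of "i + 2"] that len_U by (simp add: shortcut_tw)
  qed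
  moreover have "length ?U - 1 = length W - 3" using len_U by simp
  ultimately show ?thesis
    using shortcut_endpoints[OF assms] shortcut_transition_link[OF W len(2) closed] W len len_U
    unfolding is_temporal_walk_def by auto
qed

lemma occupation_shortcut_first:
  assumes W: "is_temporal_walk Es s z W" and len: "3 \<le> length W" "j + 1 < length W"
  shows "\<exists>x y. (tw_from (shortcut W j) 0, x, y) \<in> occupation W \<and>
    x \<le> tw_time (shortcut W j) 0 \<and> tw_time (shortcut W j) 0 \<le> y"
proof (cases "j = 0")
  case True
  then have "tw_from (shortcut W j) 0 = tw_to W 1" "tw_time (shortcut W j) 0 = tw_time W 2"
    using temporal_walk_step(1)[OF W, of 1] len by (simp_all add: shortcut_tw numeral_2_eq_2)
  then show ?thesis
    using occupation_between_transitions[of 1 W] temporal_walk_step(2)[OF W, of 1] len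
    by (fastforce simp: numeral_2_eq_2)
next
  case False
  then have "(tw_from (shortcut W j) 0, tw_time (shortcut W j) 0, tw_time (shortcut W j) 0) \<in> occupation W"
    using len by (simp add: shortcut_tw occupation_def)
  then show ?thesis by blast
qed

lemma occupation_shortcut_last:
  assumes W: "is_temporal_walk Es s z W" and len: "3 \<le> length W" "j + 1 < length W"
  shows "\<exists>x y. (tw_to (shortcut W j) (length W - 3), x, y) \<in> occupation W \<and>
    x \<le> tw_time (shortcut W j) (length W - 3) \<and> tw_time (shortcut W j) (length W - 3) \<le> y"
proof (cases "j + 2 = length W")
  case True
  then have "length W - 3 = j - 1" "j - 1 < j" "j - 1 + 1 = j" using len by auto
  then have "tw_to (shortcut W j) (length W - 3) = tw_to W (j - 1)"
    "tw_time (shortcut W j) (length W - 3) = tw_time W (j - 1)"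
    using True by (simp_all add: shortcut_tw)
  then show ?thesis
    using occupation_between_transitions[of "j - 1" W] temporal_walk_step(2)[OF W, of "j - 1"] len
      \<open>j - 1 + 1 = j\<close> by fastforce
next
  case False
  then have "j \<le> length W - 3" "length W - 3 + 2 = length W - 1" using len by auto
  then have "(tw_to (shortcut W j) (length W - 3), tw_time (shortcut W j) (length W - 3),
      tw_time (shortcut W j) (length W - 3)) \<in> occupation W"
    using shortcut_suffix_tw[of j "length W - 3" W] len by (simp add: occupation_def)
  then show ?thesis by blast
qed

lemma occupation_shortcut_between:
  assumes W: "is_temporal_walk Es s z W" and len: "j + 1 < length W" and i: "i + 3 < length W"
  shows "(tw_to (shortcut W j) i, tw_time (shortcut W j) i, tw_time (shortcut W j) (i + 1)) \<in> occupation W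
    \<or> (i + 1 = j \<and> tw_to (shortcut W j) i = tw_from W j \<and>
       tw_time (shortcut W j) i = tw_time W (j - 1) \<and> tw_time (shortcut W j) (i + 1) = tw_time W (j + 2))"
proof -
  consider "i + 1 < j" | "i + 1 = j" | "j \<le> i" by linarith
  then show ?thesis
  proof cases
    case 1
    then show ?thesis using occupation_between_transitions[of i W] len by (simp add: shortcut_tw)
  next
    case 2
    then show ?thesis using temporal_walk_step(1)[OF W, of i] i by (auto simp: shortcut_tw)
  next
    case 3
    then show ?thesis using occupation_between_transitions[of "i + 2" W] i by (simp add: shortcut_tw)
  qed
qed

lemma occupation_shortcut:
  assumes W: "is_temporal_walk Es s z W" and len: "3 \<le> length W" "j + 1 < length W"
    and occ: "(v, x, y) \<in> occupation (shortcut W j)"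
  shows "(\<exists>x' y'. (v, x', y') \<in> occupation W \<and> x' \<le> x \<and> y \<le> y') \<or>
    (0 < j \<and> j + 2 < length W \<and> v = tw_from W j \<and> x = tw_time W (j - 1) \<and> y = tw_time W (j + 2))"
proof -
  have len_U: "length (shortcut W j) = length W - 2" using len by (simp add: length_shortcut)
  then have last: "length (shortcut W j) - 1 = length W - 3" by simp
  from occ consider "(v, x, y) = (tw_from (shortcut W j) 0, tw_time (shortcut W j) 0, tw_time (shortcut W j) 0)"
    | i where "i + 1 < length (shortcut W j)"
      "(v, x, y) = (tw_to (shortcut W j) i, tw_time (shortcut W j) i, tw_time (shortcut W j) (i + 1))"
    | "(v, x, y) = (tw_to (shortcut W j) (length W - 3), tw_time (shortcut W j) (length W - 3),
        tw_time (shortcut W j) (length W - 3))"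
    unfolding occupation_def last by blast
  then show ?thesis
  proof cases
    case (2 i)
    then have i: "i + 3 < length W" using len_U by simp
    from occupation_shortcut_between[OF W len(2) i] show ?thesis using 2 i by auto
  qed (use occupation_shortcut_first[OF W len] occupation_shortcut_last[OF W len] in auto)
qed

lemma shortcut_conflict:
  assumes W: "is_temporal_walk Es s z W" and len: "3 \<le> length W" "j + 1 < length W"
    and closed: "tw_to W (j + 1) = tw_from W j"
    and disjoint: "temporally_disjoint W Y" and conflict: "\<not> temporally_disjoint (shortcut W j) Y"
  shows "\<exists>c d. (tw_from W j, c, d) \<in> occupation Y \<and> tw_time W j < c \<and> d < tw_time W (j + 1)"
proof -
  obtain v x y c d where occ: "(v, x, y) \<in> occupation (shortcut W j)"
    and occ_Y: "(v, c, d) \<in> occupation Y" and overlap: "max x c \<le> min y d"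
    using conflict unfolding temporally_disjoint_def by blast
  from occupation_shortcut[OF W len occ] show ?thesis
  proof
    assume "\<exists>x' y'. (v, x', y') \<in> occupation W \<and> x' \<le> x \<and> y \<le> y'"
    then show ?thesis using temporally_disjointD[OF disjoint _ occ_Y] overlap by fastforce
  next
    assume new: "0 < j \<and> j + 2 < length W \<and> v = tw_from W j \<and>
      x = tw_time W (j - 1) \<and> y = tw_time W (j + 2)"
    have before: "(v, tw_time W (j - 1), tw_time W j) \<in> occupation W"
      using occupation_between_transitions[of "j - 1" W] temporal_walk_step(1)[OF W, of "j - 1"] new by simp
    have after: "(v, tw_time W (j + 1), tw_time W (j + 2)) \<in> occupation W"
      using occupation_between_transitions[of "j + 1" W] closed new by (simp add: add.assoc)
    have "tw_time W (j - 1) < tw_time W j" "tw_time W (j + 1) < tw_time W (j + 2)"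
      using temporal_walk_step(2)[OF W, of "j - 1"] temporal_walk_step(2)[OF W, of "j + 1"] new
      by (simp_all add: add.assoc)
    moreover have "\<not> max (tw_time W (j - 1)) c \<le> min (tw_time W j) d"
      "\<not> max (tw_time W (j + 1)) c \<le> min (tw_time W (j + 2)) d"
      using temporally_disjointD[OF disjoint before occ_Y] temporally_disjointD[OF disjoint after occ_Y]
      by blast+
    ultimately have "tw_time W j < c" "d < tw_time W (j + 1)"
      using overlap new by (auto simp: max_def min_def split: if_split_asm)
    then show ?thesis using occ_Y new by blast
  qed
qed

lemma is_tdw_solution_walk:
  assumes "is_tdw_solution Es S Sol" "((s, z), W) \<in> set Sol"
  shows "is_temporal_walk Es s z W"
  using assms unfolding is_tdw_solution_def by (metis fst_conv in_set_conv_nth snd_conv)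

lemma is_tdw_solution_list_update:
  assumes sol: "is_tdw_solution Es S Sol" and p: "p < length Sol" "fst (Sol ! p) = (s, z)"
    and walk: "is_temporal_walk Es s z W"
    and disjoint: "\<forall>q < length Sol. q \<noteq> p \<longrightarrow> temporally_disjoint W (snd (Sol ! q))"
  shows "is_tdw_solution Es S (Sol[p := ((s, z), W)])"
proof -
  have "map fst (Sol[p := ((s, z), W)]) = map fst Sol"
    using p list_update_id[of "map fst Sol" p] by (simp add: map_update)
  then show ?thesis
    using sol walk disjoint p temporally_disjoint_sym
    unfolding is_tdw_solution_def by (auto simp: nth_list_update)
qed

lemma total_length_list_update:
  "p < length Sol \<Longrightarrow>
    total_length (Sol[p := x]) + length (snd (Sol ! p)) = total_length Sol + length (snd x)"
proof (induction Sol arbitrary: p)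
  case (Cons y Sol)
  then show ?case by (cases p) (auto simp: total_length_def)
qed simp

definition minimal_tdw_solution ::
  "('v set set) list \<Rightarrow> ('v \<times> 'v) multiset \<Rightarrow> (('v \<times> 'v) \<times> 'v twalk) list \<Rightarrow> bool" where
  "minimal_tdw_solution Es S Sol \<longleftrightarrow> is_tdw_solution Es S Sol \<and>
     (\<forall>Sol'. is_tdw_solution Es S Sol' \<longrightarrow> total_length Sol \<le> total_length Sol')"

lemma minimal_tdw_solution_shortcut_conflict:
  assumes min: "minimal_tdw_solution Es S Sol" and X: "(st, X) \<in> set Sol"
    and len: "3 \<le> length X" "j + 1 < length X" and closed: "tw_to X (j + 1) = tw_from X j"
  shows "\<exists>(st', Y) \<in> set Sol. temporally_disjoint X Y \<and>
    (\<exists>c d. (tw_from X j, c, d) \<in> occupation Y \<and> tw_time X j < c \<and> d < tw_time X (j + 1))"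
proof -
  obtain s z where st: "st = (s, z)" by (cases st)
  obtain p where p: "p < length Sol" "Sol ! p = ((s, z), X)" using X st by (auto simp: in_set_conv_nth)
  have sol: "is_tdw_solution Es S Sol" using min by (simp add: minimal_tdw_solution_def)
  have walk: "is_temporal_walk Es s z X" using is_tdw_solution_walk[OF sol] X st by simp
  let ?Sol' = "Sol[p := ((s, z), shortcut X j)]"
  have "\<not> is_tdw_solution Es S ?Sol'"
  proof
    assume "is_tdw_solution Es S ?Sol'"
    then have "total_length Sol \<le> total_length ?Sol'"
      using min by (simp add: minimal_tdw_solution_def)
    moreover have "total_length ?Sol' + length X = total_length Sol + (length X - 2)"
      using total_length_list_update[OF p(1)] p(2) len by (simp add: length_shortcut)
    ultimately show False using len by linarith
  qed
  then obtain q where q: "q < length Sol" "q \<noteq> p"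
    "\<not> temporally_disjoint (shortcut X j) (snd (Sol ! q))"
    using is_tdw_solution_list_update[OF sol p(1) _ shortcut_is_temporal_walk[OF walk len closed]] p(2)
    by auto
  have "temporally_disjoint X (snd (Sol ! q))"
    using sol p q unfolding is_tdw_solution_def by (metis snd_conv)
  then show ?thesis
    using shortcut_conflict[OF walk len closed _ q(3)] nth_mem[OF q(1)]
    by (intro bexI[of _ "Sol ! q"]) (auto simp: case_prod_beta)
qed

definition back_and_forth_at :: "'v twalk \<Rightarrow> nat \<Rightarrow> bool" where
  "back_and_forth_at W i \<longleftrightarrow> i + 1 < length W \<and>
     tw_from W (i + 1) = tw_to W i \<and> tw_to W (i + 1) = tw_from W i \<and> tw_time W i < tw_time W (i + 1)"

lemma num_back_and_forth_eq_card: "num_back_and_forth W = card {i. back_and_forth_at W i}"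
  unfolding num_back_and_forth_def back_and_forth_at_def ..

lemma num_back_and_forth_le_1: "length W < 3 \<Longrightarrow> num_back_and_forth W \<le> 1"
  unfolding num_back_and_forth_eq_card
  by (rule order.trans[OF card_mono[of "{0}"]]) (auto simp: back_and_forth_at_def)

lemma temporal_line_nested_stay:
  assumes line: "temporal_line V Es" and Y: "is_temporal_walk Es s z Y"
    and disjoint: "temporally_disjoint X Y"
    and stay_X: "(b, t, t') \<in> occupation X" and edge: "{a, b} \<in> underlying_edges Es"
    and stay_Y: "(a, c, d) \<in> occupation Y" and inside: "t < c" "d < t'"
  shows "c = tw_time Y 0 \<or> c = tw_time Y (length Y - 1) \<or>
    (\<exists>m. back_and_forth_at Y m \<and> c = tw_time Y m \<and> d = tw_time Y (m + 1))"
proof -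
  from stay_Y consider "c = tw_time Y 0" | "c = tw_time Y (length Y - 1)"
    | (between) m where "m + 1 < length Y" "a = tw_to Y m" "c = tw_time Y m" "d = tw_time Y (m + 1)"
    unfolding occupation_def by blast
  then show ?thesis
  proof cases
    case (between m)
    let ?u = "tw_from Y m" and ?w = "tw_to Y (m + 1)"
    have a: "tw_from Y (m + 1) = a" using temporal_walk_step(1)[OF Y between(1)] between(2) by simp
    have "c \<le> d" using occupation_le[OF Y stay_Y] .
    obtain x where x: "(?u, x, c) \<in> occupation Y"
      using occupation_before_transition[OF Y, of m] between by auto
    obtain y where y: "(?w, d, y) \<in> occupation Y"
      using occupation_after_transition[of "m + 1" Y] between by auto
    have "?u \<noteq> b"
    proof
      assume "?u = b"
      moreover have "max t x \<le> min t' c" using occupation_le[OF Y x] inside \<open>c \<le> d\<close> by simp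
      ultimately show False using temporally_disjointD[OF disjoint stay_X] x by blast
    qed
    moreover have "?w \<noteq> b"
    proof
      assume "?w = b"
      moreover have "max t d \<le> min t' y" using occupation_le[OF Y y] inside \<open>c \<le> d\<close> by simp
      ultimately show False using temporally_disjointD[OF disjoint stay_X] y by blast
    qed
    moreover obtain p q where "\<And>u. {a, u} \<in> underlying_edges Es \<Longrightarrow> u = p \<or> u = q"
      using temporal_line_at_most_two_neighbours[OF line] by blast
    moreover have "{a, ?u} \<in> underlying_edges Es" "{a, ?w} \<in> underlying_edges Es"
      using temporal_walk_underlying_edge[OF Y, of m] temporal_walk_underlying_edge[OF Y, of "m + 1"]
        between a by (simp_all add: insert_commute)
    ultimately have "?u = ?w" using edge by blast
    then have "back_and_forth_at Y m"
      using a between temporal_walk_step(2)[OF Y between(1)] by (simp add: back_and_forth_at_def)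
    then show ?thesis using between by blast
  qed simp_all
qed

definition walk_end_times :: "(('v \<times> 'v) \<times> 'v twalk) list \<Rightarrow> nat set" where
  "walk_end_times Sol = (\<Union>(st, Y) \<in> set Sol. {tw_time Y 0, tw_time Y (length Y - 1)})"

lemma finite_walk_end_times: "finite (walk_end_times Sol)"
  unfolding walk_end_times_def by auto

lemma walk_end_times_memI:
  assumes "(st, Y) \<in> set Sol"
  shows "tw_time Y 0 \<in> walk_end_times Sol" "tw_time Y (length Y - 1) \<in> walk_end_times Sol"
  using assms unfolding walk_end_times_def by force+

lemma card_walk_end_times: "card (walk_end_times Sol) \<le> 2 * length Sol"
proof -
  have "card (walk_end_times Sol) \<le> (\<Sum>(st, Y) \<in> set Sol. card {tw_time Y 0, tw_time Y (length Y - 1)})"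
    unfolding walk_end_times_def case_prod_beta by (rule card_UN_le) simp
  also have "\<dots> \<le> (\<Sum>_ \<in> set Sol. 2)"
    by (rule sum_mono) (auto simp: card_insert_if)
  also have "\<dots> \<le> 2 * length Sol"
    using card_length[of Sol] by simp
  finally show ?thesis .
qed

lemma minimal_tdw_solution_back_and_forth_step:
  assumes line: "temporal_line V Es" and min: "minimal_tdw_solution Es S Sol"
    and X: "(st, X) \<in> set Sol" and bf: "back_and_forth_at X j" and len: "3 \<le> length X"
  shows "(\<exists>e \<in> walk_end_times Sol. tw_time X j < e \<and> e < tw_time X (j + 1)) \<or>
    (\<exists>(st', Y) \<in> set Sol. \<exists>m. back_and_forth_at Y m \<and>
       tw_time X j < tw_time Y m \<and> tw_time Y (m + 1) < tw_time X (j + 1))"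
proof -
  have j: "j + 1 < length X" "tw_to X (j + 1) = tw_from X j"
    using bf by (simp_all add: back_and_forth_at_def)
  obtain s' z' Y c d where Y: "((s', z'), Y) \<in> set Sol" "temporally_disjoint X Y"
    and stay_Y: "(tw_from X j, c, d) \<in> occupation Y" and inside: "tw_time X j < c" "d < tw_time X (j + 1)"
    using minimal_tdw_solution_shortcut_conflict[OF min X len j] by auto
  have sol: "is_tdw_solution Es S Sol" using min by (simp add: minimal_tdw_solution_def)
  obtain s z where "((s, z), X) \<in> set Sol" using X by (cases st) auto
  then have walk: "is_temporal_walk Es s z X" by (rule is_tdw_solution_walk[OF sol])
  have "(tw_to X j, tw_time X j, tw_time X (j + 1)) \<in> occupation X"
    using occupation_between_transitions j(1) .
  moreover have "{tw_from X j, tw_to X j} \<in> underlying_edges Es"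
    using temporal_walk_underlying_edge[OF walk] j(1) by simp
  ultimately consider "c = tw_time Y 0" | "c = tw_time Y (length Y - 1)"
    | m where "back_and_forth_at Y m" "c = tw_time Y m" "d = tw_time Y (m + 1)"
    using temporal_line_nested_stay[OF line is_tdw_solution_walk[OF sol Y(1)] Y(2) _ _ stay_Y inside]
    by blast
  then show ?thesis
  proof cases
    case 3
    then show ?thesis using Y(1) inside by blast
  qed (use walk_end_times_memI[OF Y(1)] inside occupation_le[OF is_tdw_solution_walk[OF sol Y(1)] stay_Y]
    in fastforce)+
qed

lemma minimal_tdw_solution_back_and_forth_end_time_between:
  assumes line: "temporal_line V Es" and min: "minimal_tdw_solution Es S Sol"
  shows "(st, X) \<in> set Sol \<Longrightarrow> back_and_forth_at X j \<Longrightarrow>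
    \<exists>e \<in> walk_end_times Sol. tw_time X j \<le> e \<and> e \<le> tw_time X (j + 1)"
proof (induction "tw_time X (j + 1) - tw_time X j" arbitrary: st X j rule: less_induct)
  case less
  show ?case
  proof (cases "3 \<le> length X")
    case False
    then have "j = 0" using less.prems(2) by (simp add: back_and_forth_at_def)
    then show ?thesis
      using walk_end_times_memI(1)[OF less.prems(1)] less.prems(2) by (auto simp: back_and_forth_at_def)
  next
    case True
    from minimal_tdw_solution_back_and_forth_step[OF line min less.prems True] show ?thesis
    proof
      assume "\<exists>e \<in> walk_end_times Sol. tw_time X j < e \<and> e < tw_time X (j + 1)"
      then show ?thesis by (meson less_imp_le)
    next
      assume "\<exists>(st', Y) \<in> set Sol. \<exists>m. back_and_forth_at Y m \<and>
        tw_time X j < tw_time Y m \<and> tw_time Y (m + 1) < tw_time X (j + 1)"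
      then obtain st' Y m where Y: "(st', Y) \<in> set Sol" "back_and_forth_at Y m"
        and nested: "tw_time X j < tw_time Y m" "tw_time Y (m + 1) < tw_time X (j + 1)"
        by blast
      have "tw_time Y m < tw_time Y (m + 1)" using Y(2) by (simp add: back_and_forth_at_def)
      then have "tw_time Y (m + 1) - tw_time Y m < tw_time X (j + 1) - tw_time X j"
        using nested by linarith
      from less.hyps[OF this Y] nested show ?thesis by (meson less_imp_le order_trans)
    qed
  qed
qed

lemma minimal_tdw_solution_back_and_forth_end_time_inside:
  assumes line: "temporal_line V Es" and min: "minimal_tdw_solution Es S Sol"
    and X: "(st, X) \<in> set Sol" and bf: "back_and_forth_at X j" and len: "3 \<le> length X"
  shows "\<exists>e \<in> walk_end_times Sol. tw_time X j < e \<and> e < tw_time X (j + 1)"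
  using minimal_tdw_solution_back_and_forth_step[OF line min X bf len]
proof
  assume "\<exists>(st', Y) \<in> set Sol. \<exists>m. back_and_forth_at Y m \<and>
    tw_time X j < tw_time Y m \<and> tw_time Y (m + 1) < tw_time X (j + 1)"
  then obtain st' Y m where Y: "(st', Y) \<in> set Sol" "back_and_forth_at Y m"
    and nested: "tw_time X j < tw_time Y m" "tw_time Y (m + 1) < tw_time X (j + 1)"
    by blast
  from minimal_tdw_solution_back_and_forth_end_time_between[OF line min Y] nested
  show ?thesis by (meson le_less_trans less_le_trans)
qed

lemma card_le_card_if_intervals_hit:
  fixes t :: "nat \<Rightarrow> 'a::linorder"
  assumes mono: "strict_mono_on {..<n} t" and "finite E"
    and hit: "\<And>i. i \<in> I \<Longrightarrow> i + 1 < n \<and> (\<exists>e \<in> E. t i < e \<and> e < t (i + 1))"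
  shows "card I \<le> card E"
proof -
  obtain f where f: "\<And>i. i \<in> I \<Longrightarrow> f i \<in> E \<and> t i < f i \<and> f i < t (i + 1)"
    using hit by metis
  have "f i < f i'" if "i \<in> I" "i' \<in> I" "i < i'" for i i'
  proof -
    have "t (i + 1) \<le> t i'"
      using strict_mono_on_leD[OF mono] hit[OF that(2)] that(3) by simp
    then show ?thesis using f[OF that(1)] f[OF that(2)] by (meson less_le_trans less_trans)
  qed
  then have "inj_on f I" by (intro linorder_inj_onI') (metis less_irrefl)
  moreover have "f ` I \<subseteq> E" using f by blast
  ultimately show ?thesis using card_inj_on_le \<open>finite E\<close> by blast
qed

theorem mainTheorem8:
  fixes V :: "'v set" and Es :: "('v set set) list"
    and S :: "('v \<times> 'v) multiset" and Sol :: "(('v \<times> 'v) \<times> 'v twalk) list"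
    and s z :: 'v and W :: "'v twalk"
  assumes "temporal_line V Es"
    and "set_mset S \<subseteq> V \<times> V"
    and "is_tdw_solution Es S Sol"
    and "\<forall>Sol'. is_tdw_solution Es S Sol' \<longrightarrow> total_length Sol \<le> total_length Sol'"
    and "((s, z), W) \<in> set Sol"
  shows "num_back_and_forth W \<le> 2 * size S"
proof -
  have min: "minimal_tdw_solution Es S Sol"
    using assms(3,4) by (simp add: minimal_tdw_solution_def)
  have size: "size S = length Sol"
    using assms(3) unfolding is_tdw_solution_def by (metis length_map size_mset)
  show ?thesis
  proof (cases "3 \<le> length W")
    case True
    have "num_back_and_forth W \<le> card (walk_end_times Sol)"
      unfolding num_back_and_forth_eq_card
    proof (rule card_le_card_if_intervals_hit[OF _ finite_walk_end_times])
      show "strict_mono_on {..<length W} (tw_time W)"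
        using temporal_walk_time_strict_mono is_tdw_solution_walk[OF assms(3,5)] .
      show "i + 1 < length W \<and> (\<exists>e \<in> walk_end_times Sol. tw_time W i < e \<and> e < tw_time W (i + 1))"
        if "i \<in> {i. back_and_forth_at W i}" for i
        using that minimal_tdw_solution_back_and_forth_end_time_inside[OF assms(1) min assms(5) _ True]
        by (simp add: back_and_forth_at_def)
    qed
    then show ?thesis using card_walk_end_times[of Sol] size by linarith
  next
    case False
    then have "num_back_and_forth W \<le> 1" by (intro num_back_and_forth_le_1) simp
    moreover have "Sol \<noteq> []" using assms(5) by auto
    ultimately show ?thesis using size by (cases Sol) auto
  qed
qed

end
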